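(* Let $N>0$, let $\langle k\rangle>1$ (the average node degree), and let $\beta>0$, $\gamma\ge 0$, $p\ge 0$ be parameters. Consider the mean-field ODE system in which the numbers of susceptible nodes $S$, infected nodes $I$, active susceptible–susceptible edges $[SS]$ and active susceptible–infected edges $[SI]$ satisfy $$\dot S=-\beta[SI],\qquad \dot I=\beta[SI]-\gamma I,$$ $$\dot{[SI]}=\beta\left(\frac{\langle k\rangle-1}{\langle k\rangle}\,\frac{[SS][SI]-[SI]^2}{S}-[SI]\right)-(\gamma+p)[SI],$$ with initial data depending on $I_0\in(0,N/4)$ given by $S(0)=N-I_0$, $I(0)=I_0$, $[SI](0)=\langle k\rangle I_0$, $[SS](0)=\frac{\langle k\rangle N}{2}-\langle k\rangle I_0$. Let $$p_1^*=\beta\left(\frac{\langle k\rangle}{2}-\frac32\right)-\gamma,\qquad p_2^*=p_1^*-\gamma+\frac{\gamma^2}{\beta\langle k\rangle}.$$ If $p>p_2^*$, then $\lim_{I_0\to 0}\frac{1}{I_0}\ddot I(0)<0$, where $\ddot I(0)=\beta\,\dot{[SI]}(0)-\gamma\,\dot I(0)$ is computed from the system above.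
   Context: This is an SIR epidemic on an adaptive network with temporary link deactivation: susceptible–infected edges are deactivated at rate $p$, infection occurs at rate $\beta$ along active $[SI]$ edges, and infected nodes recover at rate $\gamma$. The equation for $[SI]$ arises from the edge equation $\dot{[SI]}=\beta[SSI]-\beta([SI]+[ISI])-\gamma[SI]-p[SI]$ closed by the moment closure $[ABC]\approx\frac{\langle k\rangle-1}{\langle k\rangle}\frac{[AB][BC]}{B}$ for triple links. The total number of edges is $\bar N=\langle k\rangle N/2=[SS](0)+[SI](0)$. With $R_0=\beta\langle k\rangle/\gamma$ one has $p_2^*=p_1^*-\gamma(1-1/R_0)$. *)

theory Defs
  imports Complex_Main
begin

definition S_rhs :: "real \<Rightarrow> real \<Rightarrow> real" where
  "S_rhs \<beta> SI = - \<beta> * SI"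

definition I_rhs :: "real \<Rightarrow> real \<Rightarrow> real \<Rightarrow> real \<Rightarrow> real" where
  "I_rhs \<beta> \<gamma> I SI = \<beta> * SI - \<gamma> * I"

definition SI_rhs :: "real \<Rightarrow> real \<Rightarrow> real \<Rightarrow> real \<Rightarrow> real \<Rightarrow> real \<Rightarrow> real \<Rightarrow> real" where
  "SI_rhs \<beta> \<gamma> p k S SS SI =
     \<beta> * ((k - 1) / k * (SS * SI - SI ^ 2) / S - SI) - (\<gamma> + p) * SI"

definition S0 :: "real \<Rightarrow> real \<Rightarrow> real" where "S0 N I0 = N - I0"
definition SI0 :: "real \<Rightarrow> real \<Rightarrow> real" where "SI0 k I0 = k * I0"
definition SS0 :: "real \<Rightarrow> real \<Rightarrow> real \<Rightarrow> real" where "SS0 N k I0 = k * N / 2 - k * I0"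

definition Iddot0 :: "real \<Rightarrow> real \<Rightarrow> real \<Rightarrow> real \<Rightarrow> real \<Rightarrow> real \<Rightarrow> real" where
  "Iddot0 N k \<beta> \<gamma> p I0 =
     \<beta> * SI_rhs \<beta> \<gamma> p k (S0 N I0) (SS0 N k I0) (SI0 k I0)
     - \<gamma> * I_rhs \<beta> \<gamma> I0 (SI0 k I0)"

definition p1star :: "real \<Rightarrow> real \<Rightarrow> real \<Rightarrow> real" where
  "p1star \<beta> \<gamma> k = \<beta> * (k / 2 - 3 / 2) - \<gamma>"

definition p2star :: "real \<Rightarrow> real \<Rightarrow> real \<Rightarrow> real" where
  "p2star \<beta> \<gamma> k = p1star \<beta> \<gamma> k - \<gamma> + \<gamma> ^ 2 / (\<beta> * k)"

end

theory Submission
  imports Defs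
begin

text \<open>Dividing by \<open>I0\<close> leaves a rational function of \<open>I0\<close> that is continuous at \<open>0\<close>; its value
  there is \<open>\<beta> k (p2* - p)\<close>, which is negative exactly when \<open>p > p2*\<close>.\<close>

lemma Iddot0_eq_mult:
  "Iddot0 N k \<beta> \<gamma> p x =
     x * (\<beta> * (\<beta> * ((k - 1) * (k * N / 2 - 2 * k * x) / (N - x) - k) - (\<gamma> + p) * k)
          - \<gamma> * (\<beta> * k - \<gamma>))"
proof -
  \<comment> \<open>No side conditions: at \<open>k = 0\<close> or \<open>x = N\<close> both sides are \<open>0\<close> since \<open>a / 0 = 0\<close>.\<close>
  have closure_term: "(k - 1) / k * ((k * N / 2 - k * x) * (k * x) - (k * x)\<^sup>2) / (N - x)
      = x * ((k - 1) * (k * N / 2 - 2 * k * x) / (N - x))"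
    by (cases "k = 0"; cases "x = N") (simp_all add: field_simps power2_eq_square)
  show ?thesis
    unfolding Iddot0_def SI_rhs_def I_rhs_def S0_def SS0_def SI0_def closure_term
    by (simp add: algebra_simps)
qed

lemma Iddot0_div_tendsto:
  assumes "N \<noteq> 0" and "\<beta> * k \<noteq> 0"
  shows "((\<lambda>x. Iddot0 N k \<beta> \<gamma> p x / x) \<longlongrightarrow> \<beta> * k * (p2star \<beta> \<gamma> k - p)) (at 0)"
proof -
  define g where "g x = \<beta> * (\<beta> * ((k - 1) * (k * N / 2 - 2 * k * x) / (N - x) - k)
    - (\<gamma> + p) * k) - \<gamma> * (\<beta> * k - \<gamma>)" for x
  have "(g \<longlongrightarrow> g 0) (at 0)"
    unfolding g_def using assms(1) by (intro tendsto_intros) auto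
  moreover have "g 0 = \<beta> * k * (p2star \<beta> \<gamma> k - p)"
    using assms unfolding g_def p2star_def p1star_def
    by (simp add: field_simps power2_eq_square)
  moreover have "\<forall>\<^sub>F x in at 0. g x = Iddot0 N k \<beta> \<gamma> p x / x"
    using eventually_at_filter by (fastforce simp: Iddot0_eq_mult g_def)
  ultimately show ?thesis
    using tendsto_cong by fastforce
qed

theorem mainTheorem2:
  fixes N k \<beta> \<gamma> p :: real
  assumes "N > 0" and "k > 1" and "\<beta> > 0" and "\<gamma> \<ge> 0" and "p \<ge> 0"
    and "p > p2star \<beta> \<gamma> k"
  shows "\<exists>L. ((\<lambda>I0. Iddot0 N k \<beta> \<gamma> p I0 / I0) \<longlongrightarrow> L) (at_right 0) \<and> L < 0"
proof (intro exI conjI)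
  show "((\<lambda>I0. Iddot0 N k \<beta> \<gamma> p I0 / I0) \<longlongrightarrow> \<beta> * k * (p2star \<beta> \<gamma> k - p)) (at_right 0)"
    using Iddot0_div_tendsto[of N \<beta> k \<gamma> p] assms(1-3) by (auto intro: tendsto_within_subset)
  show "\<beta> * k * (p2star \<beta> \<gamma> k - p) < 0"
    using assms(2,3,6) by (intro mult_pos_neg) auto
qed

end
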